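(* Let $\{G_1,\dots,G_g\}$ be a partition of $\{1,\dots,p\}$ into non-empty groups. Then the group wedge $\|\beta\|_{GWedge}:=\|\beta^{\mathcal{G}}\|_W$ defines a norm on $\mathbb{R}^p$.
   Context: For $\beta\in\mathbb{R}^p$ and a group $G_j$, $\|\beta_{G_j}\|_2:=\sqrt{|G_j|}\sqrt{\sum_{i\in G_j}\beta_i^2}$, and $\beta^{\mathcal{G}}:=(\|\beta_{G_1}\|_2,\dots,\|\beta_{G_g}\|_2)^{T}\in\mathbb{R}^g$. The wedge norm on $\mathbb{R}^g$ is $\|x\|_W:=\inf_{a\in\mathcal{A}}\frac12\sum_{j=1}^g\big(x_j^2/a_j+a_j\big)$ with $\mathcal{A}:=\{a\in\mathbb{R}^g:a_j>0\ \forall j,\ a_1\ge\dots\ge a_g\}$. *)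

theory Defs
  imports "HOL-Analysis.Analysis"
begin

text \<open>Groups are indexed by j < g (0-based); vectors in R^g are functions nat => real,
  only the values at indices < g matter.\<close>

definition wedge_A :: "nat \<Rightarrow> (nat \<Rightarrow> real) set" where
  "wedge_A g = {a. (\<forall>j<g. 0 < a j) \<and> (\<forall>i j. i \<le> j \<and> j < g \<longrightarrow> a j \<le> a i)}"

definition wedge_norm :: "nat \<Rightarrow> (nat \<Rightarrow> real) \<Rightarrow> real" where
  "wedge_norm g x = (INF a \<in> wedge_A g. (1/2) * (\<Sum>j<g. (x j)^2 / a j + a j))"

definition group_vec :: "nat \<Rightarrow> (nat \<Rightarrow> 'n::finite set) \<Rightarrow> real^'n \<Rightarrow> (nat \<Rightarrow> real)" where
  "group_vec g G \<beta> = (\<lambda>j. if j < g then sqrt (real (card (G j))) * sqrt (\<Sum>i\<in>G j. (\<beta> $ i)^2) else 0)"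

definition group_wedge :: "nat \<Rightarrow> (nat \<Rightarrow> 'n::finite set) \<Rightarrow> real^'n \<Rightarrow> real" where
  "group_wedge g G \<beta> = wedge_norm g (group_vec g G \<beta>)"

end

theory Submission
  imports Defs
begin

text \<open>The objective \<open>(x, a) \<mapsto> \<onehalf> \<Sum>\<^sub>j (x\<^sub>j\<^sup>2 / a\<^sub>j + a\<^sub>j)\<close> is jointly positively
  homogeneous and jointly subadditive, because \<open>(x + y)\<^sup>2 / (a + b) \<le> x\<^sup>2 / a + y\<^sup>2 / b\<close>, and \<open>wedge_A g\<close>
  is a convex cone; hence its infimum over a is positively homogeneous and subadditive in x. By
  AM-GM it dominates every \<open>\<bar>x\<^sub>j\<bar>\<close>, so it is definite. The group wedge composes this norm with
  \<open>\<beta> \<mapsto> \<beta>\<^sup>\<G>\<close>, whose components are scaled Euclidean norms of the blocks of \<open>\<beta>\<close>; since the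
  wedge norm is monotone in the \<open>\<bar>x\<^sub>j\<bar>\<close>, Minkowski's inequality on each block yields the
  triangle inequality.\<close>

definition wedge_objective :: "nat \<Rightarrow> (nat \<Rightarrow> real) \<Rightarrow> (nat \<Rightarrow> real) \<Rightarrow> real" where
  "wedge_objective g x a = (1/2) * (\<Sum>j<g. (x j)^2 / a j + a j)"

lemma wedge_norm_eq_INF: "wedge_norm g x = (INF a \<in> wedge_A g. wedge_objective g x a)"
  by (simp add: wedge_norm_def wedge_objective_def)

lemma const_one_in_wedge_A: "(\<lambda>_. 1) \<in> wedge_A g"
  by (simp add: wedge_A_def)

lemma scale_in_wedge_A: "c > 0 \<Longrightarrow> a \<in> wedge_A g \<Longrightarrow> (\<lambda>j. c * a j) \<in> wedge_A g"
  unfolding wedge_A_def by auto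

lemma add_in_wedge_A: "a \<in> wedge_A g \<Longrightarrow> b \<in> wedge_A g \<Longrightarrow> (\<lambda>j. a j + b j) \<in> wedge_A g"
  unfolding wedge_A_def by (auto intro: add_mono add_pos_pos)

lemma wedge_objective_nonneg: "a \<in> wedge_A g \<Longrightarrow> 0 \<le> wedge_objective g x a"
  unfolding wedge_objective_def wedge_A_def
  by (auto intro!: sum_nonneg add_nonneg_nonneg divide_nonneg_nonneg simp: less_imp_le)

lemma wedge_norm_le_objective: "a \<in> wedge_A g \<Longrightarrow> wedge_norm g x \<le> wedge_objective g x a"
  unfolding wedge_norm_eq_INF
  by (rule cINF_lower) (auto intro!: bdd_belowI[where m=0] wedge_objective_nonneg)

lemma wedge_norm_greatest:
  "(\<And>a. a \<in> wedge_A g \<Longrightarrow> m \<le> wedge_objective g x a) \<Longrightarrow> m \<le> wedge_norm g x"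
  unfolding wedge_norm_eq_INF using const_one_in_wedge_A by (intro cINF_greatest) auto

lemma wedge_norm_nonneg: "0 \<le> wedge_norm g x"
  by (rule wedge_norm_greatest) (rule wedge_objective_nonneg)

lemma wedge_objective_scale:
  assumes "c > 0"
  shows "wedge_objective g (\<lambda>j. c * x j) (\<lambda>j. c * a j) = c * wedge_objective g x a"
proof -
  have "(c * x j)^2 / (c * a j) + c * a j = c * ((x j)^2 / a j + a j)" for j
    using assms by (simp add: power2_eq_square field_simps)
  then show ?thesis unfolding wedge_objective_def by (simp add: sum_distrib_left)
qed

lemma wedge_norm_scale_le:
  assumes c: "c > 0"
  shows "wedge_norm g (\<lambda>j. c * x j) \<le> c * wedge_norm g x"
proof -
  have "wedge_norm g (\<lambda>j. c * x j) / c \<le> wedge_norm g x"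
  proof (rule wedge_norm_greatest)
    fix a assume a: "a \<in> wedge_A g"
    have "wedge_norm g (\<lambda>j. c * x j) \<le> wedge_objective g (\<lambda>j. c * x j) (\<lambda>j. c * a j)"
      by (rule wedge_norm_le_objective[OF scale_in_wedge_A[OF c a]])
    also have "\<dots> = c * wedge_objective g x a"
      by (rule wedge_objective_scale[OF c])
    finally show "wedge_norm g (\<lambda>j. c * x j) / c \<le> wedge_objective g x a"
      using c by (simp add: field_simps)
  qed
  then show ?thesis using c by (simp add: field_simps)
qed

lemma wedge_norm_zero: "wedge_norm g (\<lambda>_. 0) = 0"
proof -
  have "wedge_norm g (\<lambda>j. (1/2) * (0::real)) \<le> (1/2) * wedge_norm g (\<lambda>_. 0)"
    by (rule wedge_norm_scale_le) simp
  then show ?thesis using wedge_norm_nonneg[of g "\<lambda>_. 0"] by simp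
qed

lemma wedge_norm_scale:
  assumes "c \<ge> 0"
  shows "wedge_norm g (\<lambda>j. c * x j) = c * wedge_norm g x"
proof (cases "c = 0")
  case True
  then show ?thesis using wedge_norm_zero by simp
next
  case False
  with assms have c: "c > 0" by simp
  have "wedge_norm g x = wedge_norm g (\<lambda>j. (1/c) * (c * x j))"
    using c by simp
  also have "\<dots> \<le> (1/c) * wedge_norm g (\<lambda>j. c * x j)"
    by (rule wedge_norm_scale_le) (simp add: c)
  finally have "c * wedge_norm g x \<le> wedge_norm g (\<lambda>j. c * x j)"
    using c by (simp add: field_simps)
  with wedge_norm_scale_le[OF c, of g x] show ?thesis by simp
qed

lemma abs_le_wedge_norm:
  assumes k: "k < g"
  shows "\<bar>x k\<bar> \<le> wedge_norm g x"
proof (rule wedge_norm_greatest)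
  fix a assume "a \<in> wedge_A g"
  then have pos: "\<And>j. j < g \<Longrightarrow> 0 < a j" by (simp add: wedge_A_def)
  have "2 * \<bar>x k\<bar> \<le> (x k)^2 / a k + a k"
  proof -
    have ak: "a k > 0" using pos[OF k] .
    have "0 \<le> (\<bar>x k\<bar> - a k)^2 / a k" using ak by simp
    also have "\<dots> = (x k)^2 / a k + a k - 2 * \<bar>x k\<bar>"
      using ak by (simp add: power2_eq_square field_simps)
    finally show ?thesis by simp
  qed
  also have "\<dots> \<le> (\<Sum>j<g. (x j)^2 / a j + a j)"
    using k pos
    by (intro member_le_sum) (auto intro!: add_nonneg_nonneg divide_nonneg_nonneg simp: less_imp_le)
  finally show "\<bar>x k\<bar> \<le> wedge_objective g x a" unfolding wedge_objective_def by simp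
qed

lemma wedge_norm_pos: "k < g \<Longrightarrow> x k \<noteq> 0 \<Longrightarrow> 0 < wedge_norm g x"
  using abs_le_wedge_norm[of k g x] by simp

lemma wedge_norm_mono:
  assumes "\<And>j. j < g \<Longrightarrow> \<bar>x j\<bar> \<le> \<bar>y j\<bar>"
  shows "wedge_norm g x \<le> wedge_norm g y"
proof (rule wedge_norm_greatest)
  fix a assume a: "a \<in> wedge_A g"
  then have pos: "\<And>j. j < g \<Longrightarrow> 0 < a j" by (simp add: wedge_A_def)
  have "(x j)^2 / a j + a j \<le> (y j)^2 / a j + a j" if j: "j < g" for j
  proof -
    have "(x j)^2 \<le> (y j)^2"
      using assms[OF j] by (metis abs_ge_zero power2_abs power_mono)
    then show ?thesis using pos[OF j] by (simp add: divide_right_mono)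
  qed
  then have "wedge_objective g x a \<le> wedge_objective g y a"
    unfolding wedge_objective_def by (intro mult_left_mono sum_mono) auto
  with wedge_norm_le_objective[OF a, of x] show "wedge_norm g x \<le> wedge_objective g y a"
    by simp
qed

lemma power2_add_divide_add_le:
  fixes a b x y :: real
  assumes "a > 0" "b > 0"
  shows "(x + y)^2 / (a + b) \<le> x^2 / a + y^2 / b"
proof -
  have "x^2 / a + y^2 / b - (x + y)^2 / (a + b) = (b * x - a * y)^2 / (a * b * (a + b))"
    using assms by (simp add: power2_eq_square field_simps)
  also have "\<dots> \<ge> 0" using assms by simp
  finally show ?thesis by simp
qed

lemma wedge_objective_add_le:
  assumes "a \<in> wedge_A g" "b \<in> wedge_A g"
  shows "wedge_objective g (\<lambda>j. x j + y j) (\<lambda>j. a j + b j)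
         \<le> wedge_objective g x a + wedge_objective g y b"
proof -
  have pos: "\<And>j. j < g \<Longrightarrow> 0 < a j \<and> 0 < b j"
    using assms by (auto simp: wedge_A_def)
  have "(\<Sum>j<g. (x j + y j)^2 / (a j + b j) + (a j + b j))
        \<le> (\<Sum>j<g. ((x j)^2 / a j + a j) + ((y j)^2 / b j + b j))"
    using pos power2_add_divide_add_le by (intro sum_mono) fastforce
  then show ?thesis
    unfolding wedge_objective_def sum.distrib by (simp add: algebra_simps)
qed

lemma wedge_norm_triangle:
  "wedge_norm g (\<lambda>j. x j + y j) \<le> wedge_norm g x + wedge_norm g y"
proof -
  have split: "wedge_norm g (\<lambda>j. x j + y j) \<le> wedge_objective g x a + wedge_objective g y b"
    if "a \<in> wedge_A g" "b \<in> wedge_A g" for a b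
    using wedge_norm_le_objective[OF add_in_wedge_A[OF that], of "\<lambda>j. x j + y j"]
      wedge_objective_add_le[OF that, of x y]
    by linarith
  have "wedge_norm g (\<lambda>j. x j + y j) - wedge_objective g y b \<le> wedge_norm g x"
    if "b \<in> wedge_A g" for b
    by (rule wedge_norm_greatest) (use split that in force)
  then have "wedge_norm g (\<lambda>j. x j + y j) - wedge_norm g x \<le> wedge_norm g y"
    by (intro wedge_norm_greatest) force
  then show ?thesis by simp
qed

lemma group_vec_L2_set:
  "group_vec g G \<beta> j =
     (if j < g then sqrt (real (card (G j))) * L2_set (\<lambda>i. \<beta> $ i) (G j) else 0)"
  unfolding group_vec_def L2_set_def by simp

lemma group_vec_zero: "group_vec g G 0 = (\<lambda>_. 0)"
  by (rule ext) (simp add: group_vec_def)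

lemma group_vec_nonzero:
  fixes G :: "nat \<Rightarrow> 'n::finite set"
  assumes "k < g" "i \<in> G k" "\<beta> $ i \<noteq> 0"
  shows "group_vec g G \<beta> k \<noteq> 0"
proof -
  have "G k \<noteq> {}" using assms(2) by blast
  moreover have "L2_set (\<lambda>i. \<beta> $ i) (G k) \<noteq> 0"
    using assms(2,3) by (auto simp: L2_set_eq_0_iff)
  ultimately show ?thesis using assms(1) by (simp add: group_vec_L2_set)
qed

lemma group_vec_scaleR: "group_vec g G (c *\<^sub>R \<beta>) = (\<lambda>j. \<bar>c\<bar> * group_vec g G \<beta> j)"
proof
  fix j
  have "L2_set (\<lambda>i. (c *\<^sub>R \<beta>) $ i) (G j) = \<bar>c\<bar> * L2_set (\<lambda>i. \<beta> $ i) (G j)"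
    by (simp add: L2_set_def power_mult_distrib real_sqrt_mult sum_distrib_left[symmetric])
  then show "group_vec g G (c *\<^sub>R \<beta>) j = \<bar>c\<bar> * group_vec g G \<beta> j"
    by (simp add: group_vec_L2_set)
qed

lemma group_vec_add_le:
  assumes "j < g"
  shows "\<bar>group_vec g G (\<beta> + \<gamma>) j\<bar> \<le> \<bar>group_vec g G \<beta> j + group_vec g G \<gamma> j\<bar>"
proof -
  have "L2_set (\<lambda>i. (\<beta> + \<gamma>) $ i) (G j) \<le> L2_set (\<lambda>i. \<beta> $ i) (G j) + L2_set (\<lambda>i. \<gamma> $ i) (G j)"
    using L2_set_triangle_ineq[of "\<lambda>i. \<beta> $ i" "\<lambda>i. \<gamma> $ i" "G j"] by simp
  then have "sqrt (real (card (G j))) * L2_set (\<lambda>i. (\<beta> + \<gamma>) $ i) (G j)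
      \<le> sqrt (real (card (G j))) * L2_set (\<lambda>i. \<beta> $ i) (G j)
        + sqrt (real (card (G j))) * L2_set (\<lambda>i. \<gamma> $ i) (G j)"
    unfolding distrib_left[symmetric] by (rule mult_left_mono) simp
  with assms show ?thesis
    by (simp add: group_vec_L2_set del: vector_add_component)
qed

theorem lemma8:
  fixes g :: nat and G :: "nat \<Rightarrow> 'n::finite set"
  assumes nonempty: "\<forall>j<g. G j \<noteq> {}"
    and disjoint: "\<forall>i<g. \<forall>j<g. i \<noteq> j \<longrightarrow> G i \<inter> G j = {}"
    and cover: "(\<Union>j<g. G j) = UNIV"
  shows "(\<forall>\<beta>::real^'n. 0 \<le> group_wedge g G \<beta>)
       \<and> (\<forall>\<beta>::real^'n. group_wedge g G \<beta> = 0 \<longleftrightarrow> \<beta> = 0)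
       \<and> (\<forall>(c::real) (\<beta>::real^'n). group_wedge g G (c *\<^sub>R \<beta>) = \<bar>c\<bar> * group_wedge g G \<beta>)
       \<and> (\<forall>\<beta> \<gamma>::real^'n. group_wedge g G (\<beta> + \<gamma>) \<le> group_wedge g G \<beta> + group_wedge g G \<gamma>)"
proof -
  have definite: "\<beta> = 0" if "group_wedge g G \<beta> = 0" for \<beta> :: "real^'n"
  proof (rule ccontr)
    assume "\<beta> \<noteq> 0"
    then obtain i where i: "\<beta> $ i \<noteq> 0" by (metis vec_eq_iff zero_index)
    from cover obtain k where k: "k < g" "i \<in> G k" by blast
    have "0 < group_wedge g G \<beta>"
      unfolding group_wedge_def using k i by (intro wedge_norm_pos group_vec_nonzero)
    with that show False by simp
  qed
  have triangle: "group_wedge g G (\<beta> + \<gamma>) \<le> group_wedge g G \<beta> + group_wedge g G \<gamma>"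
    for \<beta> \<gamma> :: "real^'n"
    unfolding group_wedge_def
    using wedge_norm_mono[of g "group_vec g G (\<beta> + \<gamma>)"
        "\<lambda>j. group_vec g G \<beta> j + group_vec g G \<gamma> j", OF group_vec_add_le]
      wedge_norm_triangle[of g "group_vec g G \<beta>" "group_vec g G \<gamma>"]
    by linarith
  show ?thesis
    using definite triangle
    by (auto simp: group_wedge_def wedge_norm_nonneg group_vec_zero wedge_norm_zero
        group_vec_scaleR wedge_norm_scale)
qed

end
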